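(* Let $\alpha\subset\mathbb{Z}^2$ be a finite set of dimension $2$ with some of its sides marked. Then $\alpha$ is a marked B-polygon if and only if, after an affine unimodular transformation of $\mathbb{Z}^2$ (carrying marked sides to marked sides), one of the following holds: (1) ($B_1$-marked polygon) there is a marked side $G$ of $\alpha$ such that exactly one point of $\alpha$ lies outside the line $\operatorname{aff}(G)$, and it has lattice distance $1$ from that line; (2) ($B_2$-marked polygon) $\alpha\subset\{x_1\in\{0,1\}\}$, and both $\alpha\cap\{x_1=0\}$ and $\alpha\cap\{x_1=1\}$ are marked sides of $\alpha$; (3) (flat border marked polygon) $\alpha=\{(0,0),(a,0),(0,1),(1,1)\}$ for some integer $a>1$, and the three sides $[(0,0),(a,0)]$, $[(a,0),(1,1)]$, $[(0,1),(0,0)]$ are marked.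
   Context: A side of a finite set $\alpha\subset\mathbb{Z}^2$ of dimension $2$ is a set $\alpha\cap G$ for an edge $G$ of the convex hull of $\alpha$. $\alpha$ with a chosen set of marked sides is a marked B-polygon if for every triangle $S$ (three affinely independent points) with vertices in $\alpha$ there is a marked side $G$ of $\alpha$ such that two vertices of $S$ lie in $G$ and the third vertex has lattice distance $1$ from the line $\operatorname{aff}(G)$ (lattice distance: absolute value of the primitive integral affine function vanishing on that line). *)

theory Defs
  imports "HOL-Analysis.Analysis"
begin

type_synonym lpt = "int \<times> int"

definition embed :: "lpt \<Rightarrow> real \<times> real" where
  "embed p = (real_of_int (fst p), real_of_int (snd p))"

definition lat_dim :: "lpt set \<Rightarrow> int" where
  "lat_dim A = aff_dim (embed ` A)"

definition is_side :: "lpt set \<Rightarrow> lpt set \<Rightarrow> bool" where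
  "is_side A S \<longleftrightarrow> (\<exists>G. G face_of convex hull (embed ` A) \<and> aff_dim G = 1 \<and>
       S = {p \<in> A. embed p \<in> G})"

definition iaff :: "int \<Rightarrow> int \<Rightarrow> int \<Rightarrow> lpt \<Rightarrow> int" where
  "iaff a b c p = a * fst p + b * snd p + c"

text \<open>q lies on the affine hull of S (for S with at least two points: the line aff(S)).\<close>
definition on_aff :: "lpt set \<Rightarrow> lpt \<Rightarrow> bool" where
  "on_aff S q \<longleftrightarrow> (\<forall>a b c. (\<forall>p\<in>S. iaff a b c p = 0) \<longrightarrow> iaff a b c q = 0)"

text \<open>p has lattice distance 1 from the line aff(S): the primitive integral affine
  function vanishing on that line has absolute value 1 at p.\<close>
definition ldist1 :: "lpt set \<Rightarrow> lpt \<Rightarrow> bool" where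
  "ldist1 S p \<longleftrightarrow> (\<exists>a b c. gcd a b = 1 \<and> (\<forall>q\<in>S. iaff a b c q = 0) \<and> \<bar>iaff a b c p\<bar> = 1)"

definition aff_indep3 :: "lpt \<Rightarrow> lpt \<Rightarrow> lpt \<Rightarrow> bool" where
  "aff_indep3 x y z \<longleftrightarrow>
     (fst y - fst x) * (snd z - snd x) - (snd y - snd x) * (fst z - fst x) \<noteq> 0"

definition marked_B :: "lpt set \<Rightarrow> lpt set set \<Rightarrow> bool" where
  "marked_B A M \<longleftrightarrow>
     (\<forall>x\<in>A. \<forall>y\<in>A. \<forall>z\<in>A. aff_indep3 x y z \<longrightarrow>
        (\<exists>G\<in>M. (x \<in> G \<and> y \<in> G \<and> ldist1 G z) \<or> (x \<in> G \<and> z \<in> G \<and> ldist1 G y)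
              \<or> (y \<in> G \<and> z \<in> G \<and> ldist1 G x)))"

definition aff_unimod :: "(lpt \<Rightarrow> lpt) \<Rightarrow> bool" where
  "aff_unimod T \<longleftrightarrow> (\<exists>a b c d e f :: int. \<bar>a * d - b * c\<bar> = 1 \<and>
       T = (\<lambda>p. (a * fst p + b * snd p + e, c * fst p + d * snd p + f)))"

definition B1_marked :: "lpt set \<Rightarrow> lpt set set \<Rightarrow> bool" where
  "B1_marked A M \<longleftrightarrow> (\<exists>G\<in>M. \<exists>p. {q \<in> A. \<not> on_aff G q} = {p} \<and> ldist1 G p)"

definition B2_marked :: "lpt set \<Rightarrow> lpt set set \<Rightarrow> bool" where
  "B2_marked A M \<longleftrightarrow> A \<subseteq> {p. fst p \<in> {0, 1}} \<and>
     {p \<in> A. fst p = 0} \<in> M \<and> {p \<in> A. fst p = 1} \<in> M"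

definition flat_border_marked :: "lpt set \<Rightarrow> lpt set set \<Rightarrow> bool" where
  "flat_border_marked A M \<longleftrightarrow> (\<exists>a::int. a > 1 \<and> A = {(0,0), (a,0), (0,1), (1,1)} \<and>
     {(0,0), (a,0)} \<in> M \<and> {(a,0), (1,1)} \<in> M \<and> {(0,1), (0,0)} \<in> M)"

end

(* Take a triangle xyz of maximal area in alpha.  By the B-condition one of its edges, say xy,
   lies on a marked side G and z has lattice distance 1 from the line aff G.  The area of a
   triangle xyp is a fixed multiple of the lattice distance of p from that line, so by maximality
   no point of alpha is farther from it than z; as G is a side, alpha lies in a strip of lattice
   width 1 bounded by aff G.  If z is the only point off the line, alpha is B1.  Otherwise a
   unimodular map turns the strip into the two columns x1 = 0 and x1 = 1, with G the first one.
   If the second column is marked, alpha is B2.  If not, the B-condition for the triangles formed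
   by a point of the first column with the lowest and the highest point of the second column
   forces the first column to consist of its two extreme points, the second column to consist of
   two adjacent points, and both edges joining the columns to be marked; a shear then gives B2 or
   the flat border configuration.  Conversely the three normal forms satisfy the B-condition by
   inspection, and the B-condition is invariant under affine unimodular maps. *)

theory Submission
  imports Defs
begin

section \<open>Lattice triangles and integral affine functions\<close>

definition det3 :: "lpt \<Rightarrow> lpt \<Rightarrow> lpt \<Rightarrow> int" where
  "det3 x y z = (fst y - fst x) * (snd z - snd x) - (snd y - snd x) * (fst z - fst x)"

lemma aff_indep3_iff_det3: "aff_indep3 x y z \<longleftrightarrow> det3 x y z \<noteq> 0"
  by (simp add: aff_indep3_def det3_def)

lemma det3_swap12: "det3 y x z = - det3 x y z"
  by (simp add: det3_def algebra_simps)

lemma det3_swap23: "det3 x z y = - det3 x y z"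
  by (simp add: det3_def algebra_simps)

lemma det3_rotate: "det3 y z x = det3 x y z"
  by (simp add: det3_def algebra_simps)

lemma det3_distinct: "det3 x y z \<noteq> 0 \<Longrightarrow> x \<noteq> y \<and> x \<noteq> z \<and> y \<noteq> z"
  by (auto simp: det3_def algebra_simps)

lemma det3_eq_iaff:
  "det3 x y = iaff (snd x - snd y) (fst y - fst x) (fst x * snd y - snd x * fst y)"
  by (simp add: fun_eq_iff det3_def iaff_def algebra_simps)

lemma cross_eq_0_if_orthogonal:
  fixes u1 u2 v1 v2 w1 w2 :: "'a::idom"
  assumes "u1 * v1 + u2 * v2 = 0" "u1 * w1 + u2 * w2 = 0" "u1 \<noteq> 0 \<or> u2 \<noteq> 0"
  shows "v1 * w2 - v2 * w1 = 0"
proof -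
  have "u1 * (v1 * w2 - v2 * w1) = w2 * (u1 * v1 + u2 * v2) - v2 * (u1 * w1 + u2 * w2)"
    and "u2 * (v1 * w2 - v2 * w1) = v1 * (u1 * w1 + u2 * w2) - w1 * (u1 * v1 + u2 * v2)"
    by (simp_all add: algebra_simps)
  with assms show ?thesis
    by auto
qed

lemma iaff_diff: "iaff a b c y - iaff a b c x = a * (fst y - fst x) + b * (snd y - snd x)"
  by (simp add: iaff_def algebra_simps)

lemma det3_eq_0_if_iaff_vanishes:
  assumes "a \<noteq> 0 \<or> b \<noteq> 0" "iaff a b c x = 0" "iaff a b c y = 0" "iaff a b c z = 0"
  shows "det3 x y z = 0"
  using cross_eq_0_if_orthogonal[of a "fst y - fst x" b "snd y - snd x" "fst z - fst x" "snd z - snd x"]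
    iaff_diff[of a b c y x] iaff_diff[of a b c z x] assms
  by (simp add: det3_def)

lemma iaff_multiple_if_vanishes_at_two_points:
  assumes "gcd a b = 1" "x \<noteq> y"
    and "iaff a b c x = 0" "iaff a b c y = 0" "iaff a' b' c' x = 0" "iaff a' b' c' y = 0"
  obtains m where "\<And>p. iaff a' b' c' p = m * iaff a b c p"
proof -
  have "fst y - fst x \<noteq> 0 \<or> snd y - snd x \<noteq> 0"
    using assms(2) by (auto simp: prod_eq_iff)
  then have cross: "a * b' - b * a' = 0"
    using cross_eq_0_if_orthogonal[of "fst y - fst x" a "snd y - snd x" b a' b']
      iaff_diff[of a b c y x] iaff_diff[of a' b' c' y x] assms(3-)
    by (simp add: algebra_simps)
  obtain s t where st: "a * s + b * t = 1"
    using bezout_int[of a b] assms(1) by (metis mult.commute)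
  define m where "m = a' * s + b' * t"
  have "a' = m * a" "b' = m * b"
    using cross st unfolding m_def by algebra+
  moreover from this have "c' = m * c"
  proof -
    have "m * iaff a b c x = iaff a' b' c' x - c' + m * c"
      using \<open>a' = m * a\<close> \<open>b' = m * b\<close> by (simp add: iaff_def algebra_simps)
    with assms(3,5) show ?thesis
      by simp
  qed
  ultimately show thesis
    by (intro that[of m]) (simp add: iaff_def algebra_simps)
qed

lemma det3_multiple_of_iaff:
  assumes "gcd a b = 1" "iaff a b c x = 0" "iaff a b c y = 0"
  obtains k where "\<And>w. det3 x y w = k * iaff a b c w"
proof (cases "x = y")
  case True
  then show thesis
    by (intro that[of 0]) (simp add: det3_def)
next
  case False
  have "det3 x y x = 0" "det3 x y y = 0"
    by (simp_all add: det3_def)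
  then show thesis
    using iaff_multiple_if_vanishes_at_two_points[OF assms(1) False assms(2,3)] that
    by (metis det3_eq_iaff)
qed

lemma lat_dim_2_imp_triangle:
  assumes "lat_dim A = 2"
  shows "\<exists>x\<in>A. \<exists>y\<in>A. \<exists>z\<in>A. det3 x y z \<noteq> 0"
proof (rule ccontr)
  assume "\<not> ?thesis"
  then have degenerate: "det3 x y p = 0" if "x \<in> A" "y \<in> A" "p \<in> A" for x y p
    using that by auto
  have "aff_dim (embed ` A) \<le> 1"
  proof (cases "\<exists>x\<in>A. \<exists>y\<in>A. x \<noteq> y")
    case False
    then obtain x where "A \<subseteq> {x}"
      by blast
    then have "embed ` A \<subseteq> {embed x}"
      by auto
    then show ?thesis
      using aff_dim_subset[of "embed ` A" "{embed x}"] by simp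
  next
    case True
    then obtain x y where xy: "x \<in> A" "y \<in> A" "x \<noteq> y"
      by blast
    define n where "n = (real_of_int (snd x - snd y), real_of_int (fst y - fst x))"
    have "n \<noteq> 0"
      using xy(3) by (auto simp: n_def prod_eq_iff)
    have "n \<bullet> embed p - n \<bullet> embed x = of_int (det3 x y p)" for p
      by (simp add: n_def embed_def det3_def algebra_simps)
    then have "n \<bullet> embed p = n \<bullet> embed x" if "p \<in> A" for p
      using degenerate[OF xy(1,2) that] by (metis eq_iff_diff_eq_0 of_int_0)
    then have "embed ` A \<subseteq> {v. n \<bullet> v = n \<bullet> embed x}"
      by auto
    then have "aff_dim (embed ` A) \<le> aff_dim {v. n \<bullet> v = n \<bullet> embed x}"
      by (rule aff_dim_subset)
    then show ?thesis
      using \<open>n \<noteq> 0\<close> by simp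
  qed
  then show False
    using assms by (simp add: lat_dim_def)
qed

lemma finite_has_arg_max:
  fixes f :: "'a \<Rightarrow> 'b::linorder"
  assumes "finite S" "s \<in> S"
  obtains t where "t \<in> S" "\<forall>u\<in>S. f u \<le> f t"
proof -
  have "Max (f ` S) \<in> f ` S"
    using assms by (intro Max_in) auto
  then obtain t where "t \<in> S" "f t = Max (f ` S)"
    by auto
  then show thesis
    using that assms(1) by (metis Max_ge finite_imageI imageI)
qed

lemma exists_max_triangle:
  assumes "finite A" "lat_dim A = 2"
  obtains x y z where "x \<in> A" "y \<in> A" "z \<in> A" "det3 x y z \<noteq> 0"
    "\<forall>p\<in>A. \<forall>q\<in>A. \<forall>r\<in>A. \<bar>det3 p q r\<bar> \<le> \<bar>det3 x y z\<bar>"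
proof -
  obtain x0 y0 z0 where t0: "x0 \<in> A" "y0 \<in> A" "z0 \<in> A" "det3 x0 y0 z0 \<noteq> 0"
    using lat_dim_2_imp_triangle[OF assms(2)] by auto
  have "finite (A \<times> A \<times> A)" "(x0, y0, z0) \<in> A \<times> A \<times> A"
    using assms(1) t0 by auto
  then obtain t where t: "t \<in> A \<times> A \<times> A" "\<forall>s\<in>A \<times> A \<times> A. (\<lambda>(p, q, r). \<bar>det3 p q r\<bar>) s \<le> (\<lambda>(p, q, r). \<bar>det3 p q r\<bar>) t"
    by (rule finite_has_arg_max)
  obtain x y z where "t = (x, y, z)"
    by (cases t)
  then have xyz: "x \<in> A" "y \<in> A" "z \<in> A" and max: "\<forall>p\<in>A. \<forall>q\<in>A. \<forall>r\<in>A. \<bar>det3 p q r\<bar> \<le> \<bar>det3 x y z\<bar>"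
    using t by auto
  moreover have "det3 x y z \<noteq> 0"
    using max t0 by fastforce
  ultimately show thesis
    using that by blast
qed

lemma ldist1E:
  assumes "ldist1 G z"
  obtains a b c where "gcd a b = 1" "\<forall>q\<in>G. iaff a b c q = 0" "\<bar>iaff a b c z\<bar> = 1"
  using assms unfolding ldist1_def by metis

lemma ldist1I: "gcd a b = 1 \<Longrightarrow> \<forall>p\<in>S. iaff a b c p = 0 \<Longrightarrow> \<bar>iaff a b c q\<bar> = 1 \<Longrightarrow> ldist1 S q"
  unfolding ldist1_def by metis

lemma ldist1_column: "\<forall>p\<in>S. fst p = k \<Longrightarrow> \<bar>fst q - k\<bar> = 1 \<Longrightarrow> ldist1 S q"
  by (rule ldist1I[of 1 0 _ "- k"]) (simp_all add: iaff_def)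

lemma ldist1_same_column:
  assumes "ldist1 S v" "u \<in> S" "fst u = fst v"
  shows "\<bar>snd v - snd u\<bar> = 1"
proof -
  obtain a b c where abc: "gcd a b = 1" "\<forall>q\<in>S. iaff a b c q = 0" "\<bar>iaff a b c v\<bar> = 1"
    using assms(1) by (rule ldist1E)
  then have "\<bar>(snd v - snd u) * b\<bar> = 1"
    using iaff_diff[of a b c v u] assms(2,3) by (simp add: mult.commute)
  then show ?thesis
    by (rule abs_zmult_eq_1)
qed

lemma on_affD: "on_aff G q \<Longrightarrow> \<forall>p\<in>G. iaff a b c p = 0 \<Longrightarrow> iaff a b c q = 0"
  unfolding on_aff_def by blast

lemma on_aff_self: "q \<in> G \<Longrightarrow> on_aff G q"
  unfolding on_aff_def by blast

section \<open>Sides as integral supporting lines\<close>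

definition int_supp_side :: "lpt set \<Rightarrow> lpt set \<Rightarrow> bool" where
  "int_supp_side A S \<longleftrightarrow> (\<exists>a b c. (a \<noteq> 0 \<or> b \<noteq> 0) \<and> (\<forall>p\<in>A. 0 \<le> iaff a b c p) \<and>
     S = {p\<in>A. iaff a b c p = 0})"

lemma int_supp_sideE:
  assumes "int_supp_side A S"
  obtains a b c where "a \<noteq> 0 \<or> b \<noteq> 0" "\<forall>p\<in>A. 0 \<le> iaff a b c p"
    "S = {p\<in>A. iaff a b c p = 0}"
  using assms unfolding int_supp_side_def by auto

lemma int_supp_sideI:
  "a \<noteq> 0 \<or> b \<noteq> 0 \<Longrightarrow> \<forall>p\<in>A. 0 \<le> iaff a b c p \<Longrightarrow> S = {p\<in>A. iaff a b c p = 0} \<Longrightarrow> int_supp_side A S"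
  unfolding int_supp_side_def by metis

lemma inner_decomposition_2d:
  fixes a b d e u v :: "'a::comm_ring_1"
  shows "(d\<^sup>2 + e\<^sup>2) * (a * u + b * v) = (a * d + b * e) * (d * u + e * v) + (b * d - a * e) * (d * v - e * u)"
  by (simp add: power2_eq_square algebra_simps)

lemma int_supp_side_det3I:
  fixes \<kappa> :: real
  assumes "x \<noteq> y" "\<kappa> \<noteq> 0" "\<forall>p\<in>A. \<kappa> * det3 x y p \<le> 0" "S = {p\<in>A. det3 x y p = 0}"
  shows "int_supp_side A S"
proof -
  have line: "int_supp_side A S" if "u \<noteq> v" "\<forall>p\<in>A. 0 \<le> det3 u v p" "S = {p\<in>A. det3 u v p = 0}" for u v
    using that unfolding det3_eq_iaff by (intro int_supp_sideI) (auto simp: prod_eq_iff)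
  show ?thesis
  proof (cases "\<kappa> < 0")
    case True
    then show ?thesis
      using assms by (intro line[of x y]) (auto simp: mult_le_0_iff)
  next
    case False
    then show ?thesis
      using assms by (intro line[of y x]) (auto simp: mult_le_0_iff zero_le_mult_iff det3_swap12[of x y])
  qed
qed

lemma supporting_line_imp_int_supp_side:
  fixes a :: "real \<times> real"
  assumes "a \<noteq> 0" "\<forall>p\<in>A. a \<bullet> embed p \<le> b" "S = {p\<in>A. a \<bullet> embed p = b}"
    and "x \<in> S" "y \<in> S" "x \<noteq> y"
  shows "int_supp_side A S"
proof -
  obtain a1 a2 where a12: "a = (a1, a2)"
    by (cases a)
  define d1 where "d1 = real_of_int (fst y - fst x)"
  define d2 where "d2 = real_of_int (snd y - snd x)"
  define \<kappa> where "\<kappa> = a2 * d1 - a1 * d2"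
  have ax: "a \<bullet> embed x = b" and "a \<bullet> embed y = b"
    using assms(3-5) by auto
  then have orth: "a1 * d1 + a2 * d2 = 0"
    by (simp add: a12 embed_def d1_def d2_def algebra_simps)
  have d_pos: "d1\<^sup>2 + d2\<^sup>2 > 0"
    using assms(6) by (auto simp: d1_def d2_def prod_eq_iff sum_power2_gt_zero_iff)
  (* the real normal a is \<kappa> / |d|^2 times the integral normal of the line through x and y *)
  have key: "(d1\<^sup>2 + d2\<^sup>2) * (a \<bullet> embed p - b) = \<kappa> * det3 x y p" for p
  proof -
    define w1 where "w1 = real_of_int (fst p - fst x)"
    define w2 where "w2 = real_of_int (snd p - snd x)"
    have "a \<bullet> embed p - b = a1 * w1 + a2 * w2" "real_of_int (det3 x y p) = d1 * w2 - d2 * w1"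
      unfolding ax[symmetric] by (simp_all add: a12 embed_def w1_def w2_def d1_def d2_def det3_def algebra_simps)
    then show ?thesis
      using inner_decomposition_2d[where a = a1 and b = a2 and d = d1 and e = d2 and u = w1 and v = w2]
        orth by (simp add: \<kappa>_def)
  qed
  have "(d1\<^sup>2 + d2\<^sup>2) * (a1\<^sup>2 + a2\<^sup>2) = \<kappa>\<^sup>2"
    using inner_decomposition_2d[where a = a1 and b = a2 and d = d1 and e = d2 and u = a1 and v = a2]
      orth by (simp add: \<kappa>_def power2_eq_square)
  then have "\<kappa> \<noteq> 0"
    using assms(1) d_pos a12 by (auto simp: zero_prod_def sum_power2_eq_zero_iff)
  have sign: "\<forall>p\<in>A. \<kappa> * det3 x y p \<le> 0"
  proof
    fix p
    assume "p \<in> A"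
    then have "a \<bullet> embed p - b \<le> 0"
      using assms(2) by simp
    then show "\<kappa> * det3 x y p \<le> 0"
      using key[of p] d_pos by (metis less_eq_real_def mult_nonneg_nonpos)
  qed
  have on_line: "a \<bullet> embed p = b \<longleftrightarrow> det3 x y p = 0" for p
  proof -
    have "a \<bullet> embed p - b = 0 \<longleftrightarrow> det3 x y p = 0"
      using key[of p] d_pos \<open>\<kappa> \<noteq> 0\<close> by (metis mult_eq_0_iff of_int_eq_0_iff order_less_irrefl)
    then show ?thesis
      by simp
  qed
  have "S = {p\<in>A. det3 x y p = 0}"
    using assms(3) by (simp add: on_line)
  then show ?thesis
    by (rule int_supp_side_det3I[OF assms(6) \<open>\<kappa> \<noteq> 0\<close> sign])
qed

lemma is_side_imp_int_supp_side:
  assumes "finite A" "lat_dim A = 2" "is_side A S"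
  shows "int_supp_side A S"
proof -
  let ?P = "convex hull (embed ` A)"
  obtain F where F: "F face_of ?P" "aff_dim F = 1" "S = {p \<in> A. embed p \<in> F}"
    using assms(3) unfolding is_side_def by blast
  have fin: "finite (embed ` A)"
    using assms(1) by simp
  have "F exposed_face_of ?P"
    using F(1) exposed_face_of_polyhedron polyhedron_convex_hull[OF fin] by blast
  moreover have "F \<noteq> {}" "F \<noteq> ?P"
    using F(2) assms(2) by (auto simp: lat_dim_def aff_dim_convex_hull)
  ultimately obtain a b where a: "a \<noteq> 0" "?P \<subseteq> {v. a \<bullet> v \<le> b}" "F = ?P \<inter> {v. a \<bullet> v = b}"
    unfolding exposed_face_of by blast
  have in_P: "embed p \<in> ?P" if "p \<in> A" for p
    using that hull_subset[of "embed ` A" convex] by (meson image_eqI subsetD)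
  obtain E where E: "E \<subseteq> embed ` A" "F = convex hull E"
    using face_of_convex_hull_subset[OF finite_imp_compact[OF fin] F(1)] by blast
  have "\<exists>e1\<in>E. \<exists>e2\<in>E. e1 \<noteq> e2"
  proof (rule ccontr)
    assume "\<not> ?thesis"
    then obtain e where "E \<subseteq> {e}"
      by blast
    then have "aff_dim E \<le> 0"
      using aff_dim_subset[of E "{e}"] by simp
    then show False
      using F(2) E(2) by (simp add: aff_dim_convex_hull)
  qed
  then obtain e1 e2 where e: "e1 \<in> E" "e2 \<in> E" "e1 \<noteq> e2"
    by blast
  then obtain x y where "x \<in> A" "y \<in> A" "e1 = embed x" "e2 = embed y"
    using E(1) by blast
  moreover have "E \<subseteq> F"
    unfolding E(2) by (rule hull_subset)
  ultimately have "x \<in> S" "y \<in> S" "x \<noteq> y"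
    using e F(3) by auto
  moreover have "\<forall>p\<in>A. a \<bullet> embed p \<le> b"
    using a(2) in_P by blast
  moreover have "S = {p\<in>A. a \<bullet> embed p = b}"
    using F(3) a(3) in_P by blast
  ultimately show ?thesis
    using supporting_line_imp_int_supp_side[OF a(1)] by blast
qed

lemma int_supp_side_primitive:
  assumes side: "int_supp_side A G" and "x \<in> G" "y \<in> G" "x \<noteq> y"
    and f: "gcd a b = 1" "\<forall>q\<in>G. iaff a b c q = 0"
  obtains s :: int where "\<bar>s\<bar> = 1" "\<forall>p\<in>A. 0 \<le> s * iaff a b c p" "G = {p\<in>A. iaff a b c p = 0}"
proof -
  obtain a' b' c' where g: "a' \<noteq> 0 \<or> b' \<noteq> 0" "\<forall>p\<in>A. 0 \<le> iaff a' b' c' p"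
    "G = {p\<in>A. iaff a' b' c' p = 0}"
    using side by (rule int_supp_sideE)
  have "iaff a b c x = 0" "iaff a b c y = 0"
    using bspec[OF f(2) \<open>x \<in> G\<close>] bspec[OF f(2) \<open>y \<in> G\<close>] .
  moreover have "iaff a' b' c' x = 0" "iaff a' b' c' y = 0"
    using g(3) \<open>x \<in> G\<close> \<open>y \<in> G\<close> by auto
  ultimately obtain m where m: "\<And>p. iaff a' b' c' p = m * iaff a b c p"
    using iaff_multiple_if_vanishes_at_two_points[OF f(1) \<open>x \<noteq> y\<close>] by metis
  have "m \<noteq> 0"
  proof
    assume "m = 0"
    then have "a' = 0" "b' = 0"
      using m iaff_diff[of a' b' c' "(1, 0)" "(0, 0)"] iaff_diff[of a' b' c' "(0, 1)" "(0, 0)"] by auto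
    then show False
      using g(1) by simp
  qed
  define s :: int where "s = (if m > 0 then 1 else - 1)"
  have s: "\<bar>s\<bar> = 1" "m = \<bar>m\<bar> * s"
    using \<open>m \<noteq> 0\<close> by (auto simp: s_def)
  then have g_eq: "iaff a' b' c' p = \<bar>m\<bar> * (s * iaff a b c p)" for p
    using m[of p] by (metis mult.assoc)
  show thesis
  proof (rule that[OF s(1)])
    show "\<forall>p\<in>A. 0 \<le> s * iaff a b c p"
      using g(2) g_eq \<open>m \<noteq> 0\<close> by (simp add: zero_le_mult_iff)
    show "G = {p\<in>A. iaff a b c p = 0}"
      using g(3) g_eq \<open>m \<noteq> 0\<close> s(1) by auto
  qed
qed

section \<open>Affine unimodular maps and the B-condition\<close>

lemma aff_unimodI:
  "\<bar>a * d - b * c\<bar> = 1 \<Longrightarrow> aff_unimod (\<lambda>p. (a * fst p + b * snd p + e, c * fst p + d * snd p + f))"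
  unfolding aff_unimod_def by blast

lemma aff_unimodE:
  assumes "aff_unimod T"
  obtains a b c d e f where "\<bar>a * d - b * c\<bar> = 1"
    "T = (\<lambda>p. (a * fst p + b * snd p + e, c * fst p + d * snd p + f))"
  using assms unfolding aff_unimod_def by blast

lemma aff_unimod_id: "aff_unimod id"
proof -
  have "id = (\<lambda>p::lpt. (1 * fst p + 0 * snd p + 0, 0 * fst p + 1 * snd p + 0))"
    by (simp add: fun_eq_iff)
  then show ?thesis
    using aff_unimodI[of 1 1 0 0 0 0] by simp
qed

lemma aff_unimod_comp:
  assumes "aff_unimod T" "aff_unimod S"
  shows "aff_unimod (S \<circ> T)"
proof -
  obtain a b c d e f where T: "\<bar>a * d - b * c\<bar> = 1"
    "T = (\<lambda>p. (a * fst p + b * snd p + e, c * fst p + d * snd p + f))"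
    using assms(1) by (rule aff_unimodE)
  obtain a' b' c' d' e' f' where S: "\<bar>a' * d' - b' * c'\<bar> = 1"
    "S = (\<lambda>p. (a' * fst p + b' * snd p + e', c' * fst p + d' * snd p + f'))"
    using assms(2) by (rule aff_unimodE)
  have "(a' * a + b' * c) * (c' * b + d' * d) - (a' * b + b' * d) * (c' * a + d' * c)
      = (a' * d' - b' * c') * (a * d - b * c)"
    by (simp add: algebra_simps)
  then have "\<bar>(a' * a + b' * c) * (c' * b + d' * d) - (a' * b + b' * d) * (c' * a + d' * c)\<bar> = 1"
    using T(1) S(1) by (simp add: abs_mult)
  moreover have "S \<circ> T = (\<lambda>p. ((a' * a + b' * c) * fst p + (a' * b + b' * d) * snd p + (a' * e + b' * f + e'),
      (c' * a + d' * c) * fst p + (c' * b + d' * d) * snd p + (c' * e + d' * f + f')))"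
    by (simp add: fun_eq_iff S(2) T(2) algebra_simps)
  ultimately show ?thesis
    using aff_unimodI by presburger
qed

lemma aff_unimod_left_inverse:
  assumes "aff_unimod T"
  obtains T' where "aff_unimod T'" "\<And>p. T' (T p) = p"
proof -
  obtain a b c d e f where D: "\<bar>a * d - b * c\<bar> = 1"
    and T: "T = (\<lambda>p. (a * fst p + b * snd p + e, c * fst p + d * snd p + f))"
    using assms by (rule aff_unimodE)
  define D where "D = a * d - b * c"
  have DD: "D * D = 1"
    using D by (metis D_def abs_mult_self_eq mult_1_right)
  (* D = 1 or D = -1, so D times the adjugate of the linear part inverts it *)
  define T' where "T' = (\<lambda>q::lpt. (D * d * fst q + (- D * b) * snd q + (D * b * f - D * d * e),
    (- D * c) * fst q + D * a * snd q + (D * c * e - D * a * f)))"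
  have "(D * d) * (D * a) - (- D * b) * (- D * c) = (D * D) * D"
    by (simp add: D_def algebra_simps)
  then have "aff_unimod T'"
    unfolding T'_def using DD D D_def by (intro aff_unimodI) simp
  moreover have "T' (T p) = p" for p
  proof -
    have "T' (T p) = (D * D * fst p, D * D * snd p)"
      by (simp add: T'_def T D_def algebra_simps)
    then show ?thesis
      using DD by simp
  qed
  ultimately show thesis
    using that by blast
qed

lemma iaff_push_unimod:
  assumes "aff_unimod T"
  obtains a' b' c' where "\<And>p. iaff a' b' c' (T p) = iaff a0 b0 c0 p" "gcd a' b' = gcd a0 b0"
proof -
  obtain a b c d e f where D: "\<bar>a * d - b * c\<bar> = 1"
    and T: "T = (\<lambda>p. (a * fst p + b * snd p + e, c * fst p + d * snd p + f))"
    using assms by (rule aff_unimodE)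
  define D where "D = a * d - b * c"
  have DD: "D * D = 1"
    using D by (metis D_def abs_mult_self_eq mult_1_right)
  define a' where "a' = D * (a0 * d - b0 * c)"
  define b' where "b' = D * (b0 * a - a0 * b)"
  define c' where "c' = c0 - a' * e - b' * f"
  have a0: "a0 = a' * a + b' * c" and b0: "b0 = a' * b + b' * d"
    using DD unfolding a'_def b'_def D_def by algebra+
  have "iaff a' b' c' (T p) = iaff a0 b0 c0 p" for p
    by (simp add: T iaff_def c'_def a0 b0 algebra_simps)
  moreover have "gcd a' b' = gcd a0 b0"
  proof (rule zdvd_antisym_nonneg)
    show "gcd a' b' dvd gcd a0 b0"
      unfolding a0 b0 by simp
    show "gcd a0 b0 dvd gcd a' b'"
      unfolding a'_def b'_def by simp
  qed simp_all
  ultimately show thesis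
    using that by blast
qed

lemma unimod_onto_column:
  assumes "gcd a b = 1"
  obtains T where "aff_unimod T" "\<And>p. fst (T p) = iaff a b c p"
proof -
  obtain s t where st: "a * s + b * t = 1"
    using bezout_int[of a b] assms by (metis mult.commute)
  let ?T = "\<lambda>p::lpt. (a * fst p + b * snd p + c, (- t) * fst p + s * snd p + 0)"
  have "aff_unimod ?T"
    using st by (intro aff_unimodI) (simp add: algebra_simps)
  moreover have "fst (?T p) = iaff a b c p" for p
    by (simp add: iaff_def)
  ultimately show thesis
    using that by blast
qed

lemma det3_unimod:
  assumes "aff_unimod T"
  shows "\<bar>det3 (T x) (T y) (T z)\<bar> = \<bar>det3 x y z\<bar>"
proof -
  obtain a b c d e f where D: "\<bar>a * d - b * c\<bar> = 1"
    and T: "T = (\<lambda>p. (a * fst p + b * snd p + e, c * fst p + d * snd p + f))"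
    using assms by (rule aff_unimodE)
  have "det3 (T x) (T y) (T z) = (a * d - b * c) * det3 x y z"
    by (simp add: T det3_def algebra_simps)
  then show ?thesis
    using D by (simp add: abs_mult)
qed

lemma aff_indep3_unimod: "aff_unimod T \<Longrightarrow> aff_indep3 (T x) (T y) (T z) \<longleftrightarrow> aff_indep3 x y z"
  by (metis aff_indep3_iff_det3 abs_0_eq det3_unimod)

lemma ldist1_image:
  assumes "aff_unimod T" "ldist1 G z"
  shows "ldist1 (T ` G) (T z)"
proof -
  obtain a b c where abc: "gcd a b = 1" "\<forall>q\<in>G. iaff a b c q = 0" "\<bar>iaff a b c z\<bar> = 1"
    using assms(2) by (rule ldist1E)
  obtain a' b' c' where "\<And>p. iaff a' b' c' (T p) = iaff a b c p" "gcd a' b' = gcd a b"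
    using iaff_push_unimod[OF assms(1)] by blast
  with abc have "gcd a' b' = 1 \<and> (\<forall>q\<in>T ` G. iaff a' b' c' q = 0) \<and> \<bar>iaff a' b' c' (T z)\<bar> = 1"
    by auto
  then show ?thesis
    unfolding ldist1_def by metis
qed

lemma int_supp_side_image:
  assumes "aff_unimod T" "int_supp_side A S"
  shows "int_supp_side (T ` A) (T ` S)"
proof -
  obtain a b c where abc: "a \<noteq> 0 \<or> b \<noteq> 0" "\<forall>p\<in>A. 0 \<le> iaff a b c p"
    "S = {p\<in>A. iaff a b c p = 0}"
    using assms(2) by (rule int_supp_sideE)
  obtain a' b' c' where push: "\<And>p. iaff a' b' c' (T p) = iaff a b c p" "gcd a' b' = gcd a b"
    using iaff_push_unimod[OF assms(1)] by blast
  then have "a' \<noteq> 0 \<or> b' \<noteq> 0"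
    using abc(1) by (metis gcd_eq_0_iff)
  moreover have "\<forall>q\<in>T ` A. 0 \<le> iaff a' b' c' q"
    using abc(2) push(1) by auto
  moreover have "T ` S = {q \<in> T ` A. iaff a' b' c' q = 0}"
    using abc(3) push(1) by auto
  ultimately show ?thesis
    by (rule int_supp_sideI)
qed

definition marked_unit_edge :: "lpt set set \<Rightarrow> lpt \<Rightarrow> lpt \<Rightarrow> lpt \<Rightarrow> bool" where
  "marked_unit_edge M x y z \<longleftrightarrow> (\<exists>G\<in>M. x \<in> G \<and> y \<in> G \<and> ldist1 G z)"

lemma marked_unit_edgeI: "G \<in> M \<Longrightarrow> x \<in> G \<Longrightarrow> y \<in> G \<Longrightarrow> ldist1 G z \<Longrightarrow> marked_unit_edge M x y z"
  unfolding marked_unit_edge_def by blast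

lemma marked_unit_edge_commute: "marked_unit_edge M x y z \<longleftrightarrow> marked_unit_edge M y x z"
  unfolding marked_unit_edge_def by blast

lemma marked_B_iff_marked_unit_edge:
  "marked_B A M \<longleftrightarrow> (\<forall>x\<in>A. \<forall>y\<in>A. \<forall>z\<in>A. aff_indep3 x y z \<longrightarrow>
     marked_unit_edge M x y z \<or> marked_unit_edge M x z y \<or> marked_unit_edge M y z x)"
  by (simp only: marked_B_def marked_unit_edge_def bex_disj_distrib)

lemma marked_unit_edge_image:
  assumes "aff_unimod T" "marked_unit_edge M x y z"
  shows "marked_unit_edge ((`) T ` M) (T x) (T y) (T z)"
proof -
  obtain G where "G \<in> M" "x \<in> G" "y \<in> G" "ldist1 G z"
    using assms(2) unfolding marked_unit_edge_def by blast
  then have "T ` G \<in> (`) T ` M" "T x \<in> T ` G" "T y \<in> T ` G" "ldist1 (T ` G) (T z)"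
    using ldist1_image[OF assms(1)] by auto
  then show ?thesis
    unfolding marked_unit_edge_def by blast
qed

lemma marked_B_image:
  assumes "aff_unimod T" "marked_B A M"
  shows "marked_B (T ` A) ((`) T ` M)"
  unfolding marked_B_iff_marked_unit_edge
proof (intro ballI impI)
  fix x' y' z'
  assume "x' \<in> T ` A" "y' \<in> T ` A" "z' \<in> T ` A" "aff_indep3 x' y' z'"
  then obtain x y z where "x \<in> A" "y \<in> A" "z \<in> A" "x' = T x" "y' = T y" "z' = T z"
    "aff_indep3 x y z"
    using aff_indep3_unimod[OF assms(1)] by auto
  show "marked_unit_edge ((`) T ` M) x' y' z' \<or> marked_unit_edge ((`) T ` M) x' z' y' \<or>
      marked_unit_edge ((`) T ` M) y' z' x'"
  proof -
    have "marked_unit_edge M x y z \<or> marked_unit_edge M x z y \<or> marked_unit_edge M y z x"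
      using assms(2) \<open>x \<in> A\<close> \<open>y \<in> A\<close> \<open>z \<in> A\<close> \<open>aff_indep3 x y z\<close>
      unfolding marked_B_iff_marked_unit_edge by simp
    then show ?thesis
      using marked_unit_edge_image[OF assms(1)] \<open>x' = T x\<close> \<open>y' = T y\<close> \<open>z' = T z\<close> by metis
  qed
qed

lemma marked_B_image_iff:
  assumes "aff_unimod T"
  shows "marked_B (T ` A) ((`) T ` M) \<longleftrightarrow> marked_B A M"
proof
  obtain T' where T': "aff_unimod T'" "\<And>p. T' (T p) = p"
    using aff_unimod_left_inverse[OF assms] by blast
  assume "marked_B (T ` A) ((`) T ` M)"
  then have "marked_B (T' ` T ` A) ((`) T' ` (`) T ` M)"
    by (rule marked_B_image[OF T'(1)])
  then show "marked_B A M"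
    by (simp add: image_image T'(2))
qed (rule marked_B_image[OF assms])

section \<open>The normal forms are marked B-polygons\<close>

definition marked_normal_form :: "lpt set \<Rightarrow> lpt set set \<Rightarrow> bool" where
  "marked_normal_form A M \<longleftrightarrow> B1_marked A M \<or> B2_marked A M \<or> flat_border_marked A M"

lemma normal_form_by_id:
  "marked_normal_form A M \<Longrightarrow> \<exists>T. aff_unimod T \<and> marked_normal_form (T ` A) ((`) T ` M)"
  using aff_unimod_id by (metis id_apply image_id image_ident)

lemma normal_form_by_comp:
  assumes "aff_unimod T" "\<exists>S. aff_unimod S \<and> marked_normal_form (S ` T ` A) ((`) S ` (`) T ` M)"
  shows "\<exists>S. aff_unimod S \<and> marked_normal_form (S ` A) ((`) S ` M)"
proof -
  obtain S where S: "aff_unimod S" "marked_normal_form (S ` T ` A) ((`) S ` (`) T ` M)"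
    using assms(2) by blast
  have "(S \<circ> T) ` A = S ` T ` A" "(`) (S \<circ> T) ` M = (`) S ` (`) T ` M"
    by (simp_all add: image_comp)
  then show ?thesis
    using aff_unimod_comp[OF assms(1) S(1)] S(2) by metis
qed

lemma B1_marked_imp_marked_B:
  assumes sides: "\<forall>S\<in>M. int_supp_side A S" and "B1_marked A M"
  shows "marked_B A M"
proof -
  obtain G p where G: "G \<in> M" "{q \<in> A. \<not> on_aff G q} = {p}" "ldist1 G p"
    using assms(2) unfolding B1_marked_def by blast
  obtain a b c where abc: "a \<noteq> 0 \<or> b \<noteq> 0" "\<forall>q\<in>A. 0 \<le> iaff a b c q" "G = {q\<in>A. iaff a b c q = 0}"
    using int_supp_sideE sides G(1) by metis
  have in_G: "q \<in> G" if "q \<in> A" "q \<noteq> p" for q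
  proof -
    have "q \<notin> {q \<in> A. \<not> on_aff G q}"
      using G(2) that(2) by simp
    then have "on_aff G q"
      using that(1) by simp
    then have "iaff a b c q = 0"
      by (rule on_affD) (simp add: abc(3))
    then show ?thesis
      using abc(3) that(1) by simp
  qed
  show ?thesis
    unfolding marked_B_iff_marked_unit_edge
  proof (intro ballI impI)
    fix x y z
    assume xyz: "x \<in> A" "y \<in> A" "z \<in> A" and "aff_indep3 x y z"
    then have det: "det3 x y z \<noteq> 0"
      by (simp add: aff_indep3_iff_det3)
    then have "\<not> (x \<in> G \<and> y \<in> G \<and> z \<in> G)"
      using det3_eq_0_if_iaff_vanishes[OF abc(1), of c x y z] abc(3) by auto
    then have "x = p \<or> y = p \<or> z = p"
      using in_G xyz by metis
    moreover have "marked_unit_edge M y z x" if "x = p"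
      using that in_G[OF xyz(2)] in_G[OF xyz(3)] det3_distinct[OF det] G(3)
      by (intro marked_unit_edgeI[OF G(1)]) auto
    moreover have "marked_unit_edge M x z y" if "y = p"
      using that in_G[OF xyz(1)] in_G[OF xyz(3)] det3_distinct[OF det] G(3)
      by (intro marked_unit_edgeI[OF G(1)]) auto
    moreover have "marked_unit_edge M x y z" if "z = p"
      using that in_G[OF xyz(1)] in_G[OF xyz(2)] det3_distinct[OF det] G(3)
      by (intro marked_unit_edgeI[OF G(1)]) auto
    ultimately show "marked_unit_edge M x y z \<or> marked_unit_edge M x z y \<or> marked_unit_edge M y z x"
      by metis
  qed
qed

lemma B2_marked_imp_marked_B:
  assumes "B2_marked A M"
  shows "marked_B A M"
proof -
  have cols: "fst p \<in> {0, 1}" if "p \<in> A" for p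
    using assms that unfolding B2_marked_def by auto
  have column_marked: "{q \<in> A. fst q = fst p} \<in> M" if "p \<in> A" for p
    using assms cols[OF that] unfolding B2_marked_def by auto
  have edge: "marked_unit_edge M x y z"
    if "x \<in> A" "y \<in> A" "z \<in> A" "fst y = fst x" "fst z \<noteq> fst x" for x y z
  proof (rule marked_unit_edgeI[OF column_marked[OF that(1)]])
    have "\<bar>fst z - fst x\<bar> = 1"
      using cols[OF that(1)] cols[OF that(3)] that(5) by auto
    then show "ldist1 {q \<in> A. fst q = fst x} z"
      by (intro ldist1_column) auto
  qed (use that in auto)
  show ?thesis
    unfolding marked_B_iff_marked_unit_edge
  proof (intro ballI impI)
    fix x y z
    assume xyz: "x \<in> A" "y \<in> A" "z \<in> A" and "aff_indep3 x y z"
    then have "\<not> (fst y = fst x \<and> fst z = fst x)"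
      by (auto simp: aff_indep3_iff_det3 det3_def)
    then consider "fst y = fst x" "fst z \<noteq> fst x" | "fst z = fst x" "fst y \<noteq> fst x"
      | "fst z = fst y" "fst x \<noteq> fst y"
      using cols[OF xyz(1)] cols[OF xyz(2)] cols[OF xyz(3)] by auto
    then show "marked_unit_edge M x y z \<or> marked_unit_edge M x z y \<or> marked_unit_edge M y z x"
      by cases (simp_all add: edge xyz)
  qed
qed

lemma flat_border_marked_imp_marked_B:
  assumes "flat_border_marked A M"
  shows "marked_B A M"
proof -
  obtain h :: int where h: "h > 1" "A = {(0, 0), (h, 0), (0, 1), (1, 1)}"
    "{(0, 0), (h, 0)} \<in> M" "{(h, 0), (1, 1)} \<in> M" "{(0, 1), (0, 0)} \<in> M"
    using assms unfolding flat_border_marked_def by blast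
  have "ldist1 {(0, 0), (h, 0)} (0, 1)" "ldist1 {(0, 0), (h, 0)} (1, 1)"
    by (auto intro!: ldist1I[of 0 1 _ 0] simp: iaff_def)
  moreover have "ldist1 {(0, 1), (0, 0)} (1, 1)"
    by (auto intro!: ldist1I[of 1 0 _ 0] simp: iaff_def)
  moreover have "ldist1 {(h, 0), (1, 1)} (0, 1)"
    by (auto intro!: ldist1I[of 1 "h - 1" _ "- h"] simp: iaff_def)
  ultimately have "marked_unit_edge M (0, 0) (h, 0) (0, 1)" "marked_unit_edge M (0, 0) (h, 0) (1, 1)"
    "marked_unit_edge M (0, 1) (0, 0) (1, 1)" "marked_unit_edge M (h, 0) (1, 1) (0, 1)"
    using h(3-5) by (auto intro: marked_unit_edgeI)
  (* every nondegenerate ordered triple of the four points is covered by one of these edges *)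
  then show ?thesis
    unfolding marked_B_iff_marked_unit_edge h(2)
    by (auto simp: aff_indep3_iff_det3 det3_def marked_unit_edge_commute)
qed

lemma marked_normal_form_imp_marked_B:
  "\<forall>S\<in>M. int_supp_side A S \<Longrightarrow> marked_normal_form A M \<Longrightarrow> marked_B A M"
  unfolding marked_normal_form_def
  using B1_marked_imp_marked_B B2_marked_imp_marked_B flat_border_marked_imp_marked_B by auto

section \<open>Marked B-polygons in two adjacent columns\<close>

definition lowest_in_column :: "lpt set \<Rightarrow> lpt \<Rightarrow> bool" where
  "lowest_in_column A p \<longleftrightarrow> (\<forall>q\<in>A. fst q = fst p \<longrightarrow> snd p \<le> snd q)"

definition highest_in_column :: "lpt set \<Rightarrow> lpt \<Rightarrow> bool" where
  "highest_in_column A p \<longleftrightarrow> (\<forall>q\<in>A. fst q = fst p \<longrightarrow> snd q \<le> snd p)"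

lemma lowest_in_columnD: "lowest_in_column A l \<Longrightarrow> q \<in> A \<Longrightarrow> fst q = fst l \<Longrightarrow> snd l \<le> snd q"
  unfolding lowest_in_column_def by blast

lemma highest_in_columnD: "highest_in_column A h \<Longrightarrow> q \<in> A \<Longrightarrow> fst q = fst h \<Longrightarrow> snd q \<le> snd h"
  unfolding highest_in_column_def by blast

lemma lowest_less_highest_in_column:
  assumes "lowest_in_column A l" "highest_in_column A h" "fst h = fst l"
    and "v \<in> A" "v' \<in> A" "v \<noteq> v'" "fst v = fst l" "fst v' = fst l"
  shows "snd l < snd h"
proof -
  have "snd v \<noteq> snd v'"
    using assms(6-8) by (auto simp: prod_eq_iff)
  moreover have "snd l \<le> snd v" "snd l \<le> snd v'" "snd v \<le> snd h" "snd v' \<le> snd h"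
    using lowest_in_columnD[OF assms(1)] highest_in_columnD[OF assms(2)] assms(3-8) by simp_all
  ultimately show ?thesis
    by linarith
qed

lemma column_extremes:
  assumes "finite A" "p \<in> A"
  obtains l h where "l \<in> A" "h \<in> A" "fst l = fst p" "fst h = fst p"
    "lowest_in_column A l" "highest_in_column A h"
proof -
  let ?C = "{q\<in>A. fst q = fst p}"
  have C: "finite ?C" "p \<in> ?C"
    using assms by auto
  obtain l where "l \<in> ?C" "\<forall>q\<in>?C. - snd q \<le> - snd l"
    by (rule finite_has_arg_max[OF C, where f = "\<lambda>q. - snd q"])
  moreover obtain h where "h \<in> ?C" "\<forall>q\<in>?C. snd q \<le> snd h"
    by (rule finite_has_arg_max[OF C, where f = snd])
  ultimately show thesis
    by (intro that[of l h]) (auto simp: lowest_in_column_def highest_in_column_def)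
qed

lemma int_supp_side_in_column:
  assumes "int_supp_side A S" "u \<in> S" "v \<in> S" "u \<noteq> v" "fst u = fst v"
  shows "S = {q\<in>A. fst q = fst u}"
proof -
  obtain a b c where abc: "a \<noteq> 0 \<or> b \<noteq> 0" "\<forall>p\<in>A. 0 \<le> iaff a b c p" "S = {p\<in>A. iaff a b c p = 0}"
    using assms(1) by (rule int_supp_sideE)
  have "snd u \<noteq> snd v"
    using assms(4,5) by (auto simp: prod_eq_iff)
  have u: "iaff a b c u = 0" and "iaff a b c v = 0"
    using abc(3) assms(2,3) by auto
  then have "b * (snd v - snd u) = 0"
    using iaff_diff[of a b c v u] assms(5) by simp
  then have "b = 0"
    using \<open>snd u \<noteq> snd v\<close> by simp
  then have "iaff a b c q = a * (fst q - fst u)" for q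
    using u by (simp add: iaff_def algebra_simps)
  then show ?thesis
    using abc(1,3) \<open>b = 0\<close> by auto
qed

lemma int_supp_side_across_columns:
  assumes "int_supp_side A S" "\<forall>q\<in>A. fst q \<in> {0, 1}"
    and "w \<in> S" "u \<in> S" "fst w = 0" "fst u = 1"
  shows "S = {w, u} \<and>
    (lowest_in_column A w \<and> lowest_in_column A u \<or> highest_in_column A w \<and> highest_in_column A u)"
proof -
  obtain a b c where abc: "a \<noteq> 0 \<or> b \<noteq> 0" "\<forall>p\<in>A. 0 \<le> iaff a b c p" "S = {p\<in>A. iaff a b c p = 0}"
    using assms(1) by (rule int_supp_sideE)
  have wu: "iaff a b c w = 0" "iaff a b c u = 0"
    using abc(3) assms(3,4) by auto
  have column: "iaff a b c q = b * (snd q - snd r)" if "r \<in> {w, u}" "fst q = fst r" for q r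
    using iaff_diff[of a b c q r] wu that by auto
  have "b \<noteq> 0"
    using iaff_diff[of a b c u w] wu abc(1) assms(5,6) by auto
  have "S \<subseteq> {w, u}"
  proof
    fix q
    assume "q \<in> S"
    then have "q \<in> A" "iaff a b c q = 0"
      using abc(3) by auto
    moreover obtain r where "r \<in> {w, u}" "fst q = fst r"
      using assms(2,5,6) \<open>q \<in> A\<close> by fastforce
    ultimately have "snd q = snd r"
      using column \<open>b \<noteq> 0\<close> by simp
    with \<open>r \<in> {w, u}\<close> \<open>fst q = fst r\<close> show "q \<in> {w, u}"
      by (auto simp: prod_eq_iff)
  qed
  then have "S = {w, u}"
    using assms(3,4) by auto
  moreover have "lowest_in_column A r" if "b > 0" "r \<in> {w, u}" for r
    unfolding lowest_in_column_def
    using abc(2) column[OF that(2)] that(1) by (auto simp: zero_le_mult_iff)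
  moreover have "highest_in_column A r" if "b < 0" "r \<in> {w, u}" for r
    unfolding highest_in_column_def
    using abc(2) column[OF that(2)] that(1) by (auto simp: zero_le_mult_iff)
  ultimately show ?thesis
    using \<open>b \<noteq> 0\<close> by (cases "b > 0") auto
qed

lemma column_point_side:
  assumes mB: "marked_B A M" and sides: "\<forall>S\<in>M. int_supp_side A S"
    and cols: "\<forall>q\<in>A. fst q \<in> {0, 1}" and "{q\<in>A. fst q = 1} \<notin> M"
    and p: "p \<in> A" "fst p = 0"
    and u: "u0 \<in> A" "u1 \<in> A" "fst u0 = 1" "fst u1 = 1" "snd u0 < snd u1"
    and "lowest_in_column A u0" "highest_in_column A u1"
  shows "lowest_in_column A p \<and> {p, u0} \<in> M \<and> ldist1 {p, u0} u1 \<or>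
    highest_in_column A p \<and> {p, u1} \<in> M \<and> ldist1 {p, u1} u0"
(* The edge u0 u1 is excluded because the side through it is the unmarked second column; a side
   through p and u_i is {p, u_i} and makes p extreme in the same direction as u_i. *)
proof -
  have "\<not> highest_in_column A u0" "\<not> lowest_in_column A u1"
    using highest_in_columnD[of A u0 u1] lowest_in_columnD[of A u1 u0] u by auto
  have "det3 u0 u1 p \<noteq> 0"
    using p u by (simp add: det3_def)
  then have "marked_unit_edge M u0 u1 p \<or> marked_unit_edge M u0 p u1 \<or> marked_unit_edge M u1 p u0"
    using mB p u unfolding marked_B_iff_marked_unit_edge aff_indep3_iff_det3 by simp
  moreover have "\<not> marked_unit_edge M u0 u1 p"
  proof
    assume "marked_unit_edge M u0 u1 p"
    then obtain G where "G \<in> M" "u0 \<in> G" "u1 \<in> G"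
      unfolding marked_unit_edge_def by blast
    then have "G = {q\<in>A. fst q = 1}"
      using int_supp_side_in_column[of A G u0 u1] sides u by auto
    then show False
      using \<open>G \<in> M\<close> \<open>{q\<in>A. fst q = 1} \<notin> M\<close> by simp
  qed
  moreover have "lowest_in_column A p \<and> {p, u0} \<in> M \<and> ldist1 {p, u0} u1"
    if edge: "marked_unit_edge M u0 p u1"
  proof -
    obtain G where G: "G \<in> M" "u0 \<in> G" "p \<in> G" "ldist1 G u1"
      using edge unfolding marked_unit_edge_def by blast
    then show ?thesis
      using int_supp_side_across_columns[OF _ cols G(3,2) p(2) u(3)] sides
        \<open>\<not> highest_in_column A u0\<close> by auto
  qed
  moreover have "highest_in_column A p \<and> {p, u1} \<in> M \<and> ldist1 {p, u1} u0"
    if edge: "marked_unit_edge M u1 p u0"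
  proof -
    obtain G where G: "G \<in> M" "u1 \<in> G" "p \<in> G" "ldist1 G u0"
      using edge unfolding marked_unit_edge_def by blast
    then show ?thesis
      using int_supp_side_across_columns[OF _ cols G(3,2) p(2) u(4)] sides
        \<open>\<not> lowest_in_column A u1\<close> by auto
  qed
  ultimately show ?thesis
    by blast
qed

lemma column_strip_eq_four_points:
  assumes cols: "\<forall>q\<in>A. fst q \<in> {0, 1}"
    and w01: "w0 \<in> A" "w1 \<in> A" "fst w0 = 0" "fst w1 = 0"
      "lowest_in_column A w0" "highest_in_column A w1"
    and u01: "u0 \<in> A" "u1 \<in> A" "fst u0 = 1" "fst u1 = 1"
      "lowest_in_column A u0" "highest_in_column A u1" "snd u1 = snd u0 + 1"
    and column0: "\<And>p. p \<in> A \<Longrightarrow> fst p = 0 \<Longrightarrow> lowest_in_column A p \<or> highest_in_column A p"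
  shows "A = {w0, w1, u0, u1}"
proof -
  have "p \<in> {w0, w1, u0, u1}" if "p \<in> A" for p
  proof (cases "fst p = 0")
    case True
    then have "snd p = snd w0 \<or> snd p = snd w1"
      using column0[OF that True] lowest_in_columnD[of A p w0] lowest_in_columnD[OF w01(5) that]
        highest_in_columnD[of A p w1] highest_in_columnD[OF w01(6) that] w01(1-4) by force
    then show ?thesis
      using True w01(3,4) by (auto simp: prod_eq_iff)
  next
    case False
    then have "fst p = 1"
      using cols that by auto
    then have "snd u0 \<le> snd p" "snd p \<le> snd u1"
      using lowest_in_columnD[OF u01(5) that] highest_in_columnD[OF u01(6) that] u01(3,4) by simp_all
    then have "snd p = snd u0 \<or> snd p = snd u1"
      using u01(7) by auto
    then show ?thesis
      using \<open>fst p = 1\<close> u01(3,4) by (auto simp: prod_eq_iff)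
  qed
  then show ?thesis
    using w01 u01 by auto
qed

lemma column_strip_four_points:
  assumes "finite A" and mB: "marked_B A M" and sides: "\<forall>S\<in>M. int_supp_side A S"
    and cols: "\<forall>q\<in>A. fst q \<in> {0, 1}" and L1: "{q\<in>A. fst q = 1} \<notin> M"
    and w: "w \<in> A" "w' \<in> A" "w \<noteq> w'" "fst w = 0" "fst w' = 0"
    and u: "u \<in> A" "u' \<in> A" "u \<noteq> u'" "fst u = 1" "fst u' = 1"
  obtains w0 w1 u0 u1 where "A = {w0, w1, u0, u1}"
    "fst w0 = 0" "fst w1 = 0" "fst u0 = 1" "fst u1 = 1" "snd w0 < snd w1" "snd u1 = snd u0 + 1"
    "{w0, u0} \<in> M" "{w1, u1} \<in> M"
proof -
  obtain w0 w1 where w01: "w0 \<in> A" "w1 \<in> A" "fst w0 = 0" "fst w1 = 0"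
    "lowest_in_column A w0" "highest_in_column A w1"
    using column_extremes[OF assms(1) w(1)] w(4) by metis
  obtain u0 u1 where u01: "u0 \<in> A" "u1 \<in> A" "fst u0 = 1" "fst u1 = 1"
    "lowest_in_column A u0" "highest_in_column A u1"
    using column_extremes[OF assms(1) u(1)] u(4) by metis
  have "snd w0 < snd w1" "snd u0 < snd u1"
    using lowest_less_highest_in_column[OF w01(5,6) _ w(1-3)] w(4,5) w01(3,4)
      lowest_less_highest_in_column[OF u01(5,6) _ u(1-3)] u(4,5) u01(3,4) by simp_all
  then have "\<not> highest_in_column A w0" "\<not> lowest_in_column A w1"
    using highest_in_columnD[of A w0 w1] lowest_in_columnD[of A w1 w0] w01(1-4) by auto
  note side = column_point_side[OF mB sides cols L1 _ _ u01(1-4) \<open>snd u0 < snd u1\<close> u01(5,6)]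
  have "{w0, u0} \<in> M" "ldist1 {w0, u0} u1" "{w1, u1} \<in> M"
    using side[OF w01(1,3)] side[OF w01(2,4)] \<open>\<not> highest_in_column A w0\<close> \<open>\<not> lowest_in_column A w1\<close>
    by auto
  have "\<bar>snd u1 - snd u0\<bar> = 1"
    using ldist1_same_column[OF \<open>ldist1 {w0, u0} u1\<close>] u01(3,4) by simp
  then have "snd u1 = snd u0 + 1"
    using \<open>snd u0 < snd u1\<close> by simp
  moreover have "A = {w0, w1, u0, u1}"
    using column_strip_eq_four_points[OF cols w01 u01 \<open>snd u1 = snd u0 + 1\<close>] side by blast
  ultimately show thesis
    using that w01(3,4) u01(3,4) \<open>snd w0 < snd w1\<close> \<open>{w0, u0} \<in> M\<close> \<open>{w1, u1} \<in> M\<close> by blast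
qed

lemma four_point_normal_form:
  assumes A: "A = {w0, w1, u0, u1}"
    and cols: "fst w0 = 0" "fst w1 = 0" "fst u0 = 1" "fst u1 = 1"
    and heights: "snd w0 < snd w1" "snd u1 = snd u0 + 1"
    and marked: "{w0, w1} \<in> M" "{w0, u0} \<in> M" "{w1, u1} \<in> M"
  shows "\<exists>T. aff_unimod T \<and> marked_normal_form (T ` A) ((`) T ` M)"
proof -
  define h where "h = snd w1 - snd w0"
  define T where "T = (\<lambda>p::lpt. ((snd w0 - snd u0) * fst p + 1 * snd p + - snd w0,
    1 * fst p + 0 * snd p + 0))"
  have "aff_unimod T"
    unfolding T_def by (rule aff_unimodI) simp
  have images: "T w0 = (0, 0)" "T w1 = (h, 0)" "T u0 = (0, 1)" "T u1 = (1, 1)"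
    using cols heights by (simp_all add: T_def h_def)
  then have TA: "T ` A = {(0, 0), (h, 0), (0, 1), (1, 1)}"
    using A by simp
  have "{(0, 0), (h, 0)} = T ` {w0, w1}" "{(0, 0), (0, 1)} = T ` {w0, u0}" "{(h, 0), (1, 1)} = T ` {w1, u1}"
    using images by simp_all
  then have TM: "{(0, 0), (h, 0)} \<in> (`) T ` M" "{(0, 0), (0, 1)} \<in> (`) T ` M" "{(h, 0), (1, 1)} \<in> (`) T ` M"
    using marked by (metis rev_image_eqI)+
  have "marked_normal_form (T ` A) ((`) T ` M)"
  proof (cases "h = 1")
    case True
    have "{p \<in> T ` A. fst p = 0} = {(0, 0), (0, 1)}" "{p \<in> T ` A. fst p = 1} = {(h, 0), (1, 1)}"
      unfolding TA True by auto
    then have "B2_marked (T ` A) ((`) T ` M)"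
      unfolding B2_marked_def using TM True TA by auto
    then show ?thesis
      unfolding marked_normal_form_def by simp
  next
    case False
    then have "h > 1"
      using heights(1) h_def by simp
    then have "flat_border_marked (T ` A) ((`) T ` M)"
      unfolding flat_border_marked_def using TA TM by (auto simp: insert_commute)
    then show ?thesis
      unfolding marked_normal_form_def by simp
  qed
  with \<open>aff_unimod T\<close> show ?thesis
    by blast
qed

lemma column_strip_normal_form:
  assumes "finite A" "marked_B A M" "\<forall>S\<in>M. int_supp_side A S"
    and cols: "\<forall>q\<in>A. fst q \<in> {0, 1}" and L0: "{q\<in>A. fst q = 0} \<in> M"
    and "w \<in> A" "w' \<in> A" "w \<noteq> w'" "fst w = 0" "fst w' = 0"
    and "u \<in> A" "u' \<in> A" "u \<noteq> u'" "fst u = 1" "fst u' = 1"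
  shows "\<exists>T. aff_unimod T \<and> marked_normal_form (T ` A) ((`) T ` M)"
proof (cases "{q\<in>A. fst q = 1} \<in> M")
  case True
  then have "B2_marked A M"
    using cols L0 unfolding B2_marked_def by auto
  then have "marked_normal_form A M"
    unfolding marked_normal_form_def by simp
  then show ?thesis
    by (rule normal_form_by_id)
next
  case False
  obtain w0 w1 u0 u1 where A: "A = {w0, w1, u0, u1}"
    and pts: "fst w0 = 0" "fst w1 = 0" "fst u0 = 1" "fst u1 = 1" "snd w0 < snd w1" "snd u1 = snd u0 + 1"
    and marked: "{w0, u0} \<in> M" "{w1, u1} \<in> M"
    by (rule column_strip_four_points[OF assms(1-4) False assms(6-)])
  have "{q\<in>A. fst q = 0} = {w0, w1}"
    using A pts by auto
  then show ?thesis
    using four_point_normal_form[OF A pts] L0 marked by simp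
qed

section \<open>Marked B-polygons are in normal form\<close>

lemma max_triangle_strip:
  assumes side: "int_supp_side A G" and xy: "x \<in> G" "y \<in> G" and z: "z \<in> A" "ldist1 G z"
    and det: "det3 x y z \<noteq> 0" and max: "\<forall>p\<in>A. \<bar>det3 x y p\<bar> \<le> \<bar>det3 x y z\<bar>"
  obtains a b c where "gcd a b = 1" "\<forall>p\<in>A. iaff a b c p \<in> {0, 1}"
    "G = {p\<in>A. iaff a b c p = 0}" "iaff a b c z = 1"
proof -
  obtain a b c where f: "gcd a b = 1" "\<forall>q\<in>G. iaff a b c q = 0" "\<bar>iaff a b c z\<bar> = 1"
    using z(2) by (rule ldist1E)
  obtain k where k: "\<And>w. det3 x y w = k * iaff a b c w"
    using det3_multiple_of_iaff[OF f(1)] f(2) xy by metis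
  have "k \<noteq> 0"
    using det k[of z] by auto
  (* by maximality of xyz no point is farther from the line xy than z *)
  have bounded: "\<bar>iaff a b c p\<bar> \<le> 1" if "p \<in> A" for p
  proof -
    have "\<bar>det3 x y p\<bar> \<le> \<bar>det3 x y z\<bar>"
      using max that by simp
    also have "\<dots> = \<bar>k\<bar>"
      using k[of z] f(3) by (simp add: abs_mult)
    finally have "\<bar>k\<bar> * \<bar>iaff a b c p\<bar> \<le> \<bar>k\<bar> * 1"
      using k[of p] by (simp add: abs_mult)
    then show ?thesis
      using \<open>k \<noteq> 0\<close> by simp
  qed
  obtain s :: int where s: "\<bar>s\<bar> = 1" "\<forall>p\<in>A. 0 \<le> s * iaff a b c p" "G = {p\<in>A. iaff a b c p = 0}"
    using int_supp_side_primitive[OF side xy det3_distinct[OF det, THEN conjunct1] f(1,2)] by metis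
  have f': "iaff (s * a) (s * b) (s * c) p = s * iaff a b c p" for p
    by (simp add: iaff_def algebra_simps)
  have level: "iaff (s * a) (s * b) (s * c) p \<in> {0, 1}" if "p \<in> A" for p
  proof -
    have "\<bar>s * iaff a b c p\<bar> \<le> 1"
      using bounded[OF that] s(1) by (simp add: abs_mult)
    then have "s * iaff a b c p = 0 \<or> s * iaff a b c p = 1"
      using bspec[OF s(2) that] by linarith
    then show ?thesis
      unfolding f' by blast
  qed
  show thesis
  proof (rule that)
    show "gcd (s * a) (s * b) = 1"
      using f(1) s(1) by (simp add: gcd_mult_left abs_mult)
    show "\<forall>p\<in>A. iaff (s * a) (s * b) (s * c) p \<in> {0, 1}"
      using level by blast
    show "G = {p\<in>A. iaff (s * a) (s * b) (s * c) p = 0}"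
      using s(1,3) unfolding f' by auto
    show "iaff (s * a) (s * b) (s * c) z = 1"
      using level[OF z(1)] f(3) s(1) unfolding f' by (auto simp: abs_mult)
  qed
qed

lemma strip_B1_marked:
  assumes "gcd a b = 1" "\<forall>p\<in>A. iaff a b c p \<in> {0, 1}"
    and G: "G \<in> M" "G = {p\<in>A. iaff a b c p = 0}"
    and z: "z \<in> A" "iaff a b c z = 1" "\<forall>q\<in>A. iaff a b c q = 1 \<longrightarrow> q = z"
  shows "B1_marked A M"
proof -
  have "\<forall>p\<in>G. iaff a b c p = 0"
    using G(2) by simp
  then have "\<not> on_aff G z"
    using on_affD[of G z] z(2) by auto
  have "{q \<in> A. \<not> on_aff G q} = {z}"
  proof (intro equalityI subsetI)
    fix q
    assume "q \<in> {q \<in> A. \<not> on_aff G q}"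
    then have "q \<in> A" "q \<notin> G"
      using on_aff_self[of q G] by auto
    then have "iaff a b c q = 1"
      using assms(2) G(2) by auto
    then show "q \<in> {z}"
      using z(3) \<open>q \<in> A\<close> by simp
  next
    fix q
    assume "q \<in> {z}"
    then show "q \<in> {q \<in> A. \<not> on_aff G q}"
      using z(1) \<open>\<not> on_aff G z\<close> by simp
  qed
  moreover have "ldist1 G z"
    using assms(1) G(2) z(2) by (intro ldist1I[of a b _ c]) auto
  ultimately show ?thesis
    unfolding B1_marked_def using G(1) by metis
qed

lemma strip_normal_form:
  assumes fin: "finite A" and mB: "marked_B A M" and sides: "\<forall>S\<in>M. int_supp_side A S"
    and f: "gcd a b = 1" "\<forall>p\<in>A. iaff a b c p \<in> {0, 1}"
    and G: "G \<in> M" "G = {p\<in>A. iaff a b c p = 0}" "x \<in> G" "y \<in> G" "x \<noteq> y"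
    and z: "z \<in> A" "iaff a b c z = 1"
  shows "\<exists>T. aff_unimod T \<and> marked_normal_form (T ` A) ((`) T ` M)"
proof (cases "\<exists>z'\<in>A. iaff a b c z' = 1 \<and> z' \<noteq> z")
  case False
  then have "B1_marked A M"
    using strip_B1_marked[OF f G(1,2) z] by blast
  then show ?thesis
    by (intro normal_form_by_id) (simp add: marked_normal_form_def)
next
  case True
  then obtain z' where z': "z' \<in> A" "iaff a b c z' = 1" "z' \<noteq> z"
    by blast
  obtain T where T: "aff_unimod T" "\<And>p. fst (T p) = iaff a b c p"
    using unimod_onto_column[OF f(1)] by metis
  have "inj T"
    using aff_unimod_left_inverse[OF T(1)] by (metis injI)
  have "{q \<in> T ` A. fst q = 0} = T ` G"
    using G(2) T(2) by auto
  have "\<exists>S. aff_unimod S \<and> marked_normal_form (S ` T ` A) ((`) S ` (`) T ` M)"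
  proof (rule column_strip_normal_form[where w = "T x" and w' = "T y" and u = "T z" and u' = "T z'"])
    show "finite (T ` A)"
      using fin by simp
    show "marked_B (T ` A) ((`) T ` M)"
      by (rule marked_B_image[OF T(1) mB])
    show "\<forall>S\<in>(`) T ` M. int_supp_side (T ` A) S"
      using sides int_supp_side_image[OF T(1)] by auto
    show "\<forall>q\<in>T ` A. fst q \<in> {0, 1}"
      using f(2) T(2) by auto
    show "{q \<in> T ` A. fst q = 0} \<in> (`) T ` M"
      using \<open>{q \<in> T ` A. fst q = 0} = T ` G\<close> G(1) by simp
  qed (use G z z' T(2) \<open>inj T\<close> in \<open>auto simp: inj_eq\<close>)
  then show ?thesis
    by (rule normal_form_by_comp[OF T(1)])
qed

lemma marked_B_imp_normal_form:
  assumes fin: "finite A" and dim: "lat_dim A = 2" and sides: "\<forall>S\<in>M. int_supp_side A S"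
    and mB: "marked_B A M"
  shows "\<exists>T. aff_unimod T \<and> marked_normal_form (T ` A) ((`) T ` M)"
proof -
  obtain x y z where xyz: "x \<in> A" "y \<in> A" "z \<in> A" and det: "det3 x y z \<noteq> 0"
    and max: "\<forall>p\<in>A. \<forall>q\<in>A. \<forall>r\<in>A. \<bar>det3 p q r\<bar> \<le> \<bar>det3 x y z\<bar>"
    by (rule exists_max_triangle[OF fin dim])
  have "marked_unit_edge M x y z \<or> marked_unit_edge M x z y \<or> marked_unit_edge M y z x"
    using mB xyz det unfolding marked_B_iff_marked_unit_edge aff_indep3_iff_det3 by simp
  then obtain x' y' z' where xyz': "x' \<in> A" "y' \<in> A" "z' \<in> A" "\<bar>det3 x' y' z'\<bar> = \<bar>det3 x y z\<bar>"
    and "marked_unit_edge M x' y' z'"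
  proof (elim disjE)
    assume "marked_unit_edge M x z y"
    then show thesis
      using that[of x z y] xyz det3_swap23[of x y z] by simp
  next
    assume "marked_unit_edge M y z x"
    moreover have "\<bar>det3 y z x\<bar> = \<bar>det3 x y z\<bar>"
      by (metis det3_rotate)
    ultimately show thesis
      using that[of y z x] xyz by simp
  qed (use that xyz in blast)
  then obtain G where G: "G \<in> M" "x' \<in> G" "y' \<in> G" "ldist1 G z'"
    unfolding marked_unit_edge_def by blast
  have det': "det3 x' y' z' \<noteq> 0"
    using xyz'(4) det by auto
  have max': "\<forall>p\<in>A. \<bar>det3 x' y' p\<bar> \<le> \<bar>det3 x' y' z'\<bar>"
    using max xyz'(1,2,4) by simp
  obtain a b c where strip: "gcd a b = 1" "\<forall>p\<in>A. iaff a b c p \<in> {0, 1}"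
    "G = {p\<in>A. iaff a b c p = 0}" "iaff a b c z' = 1"
    by (rule max_triangle_strip[OF bspec[OF sides G(1)] G(2,3) xyz'(3) G(4) det' max'])
  moreover have "x' \<noteq> y'"
    using det3_distinct[OF det'] by simp
  ultimately show ?thesis
    using strip_normal_form[OF fin mB sides _ _ G(1) _ G(2,3) _ xyz'(3)] by simp
qed

theorem lemma4p4:
  fixes \<alpha> :: "(int \<times> int) set" and M :: "(int \<times> int) set set"
  assumes "finite \<alpha>" and "lat_dim \<alpha> = 2" and "\<forall>S\<in>M. is_side \<alpha> S"
  shows "marked_B \<alpha> M \<longleftrightarrow>
    (\<exists>T. aff_unimod T \<and>
       (B1_marked (T ` \<alpha>) ((`) T ` M) \<or> B2_marked (T ` \<alpha>) ((`) T ` M)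
        \<or> flat_border_marked (T ` \<alpha>) ((`) T ` M)))"
proof -
  have sides: "\<forall>S\<in>M. int_supp_side \<alpha> S"
    using is_side_imp_int_supp_side assms by blast
  have "marked_B \<alpha> M \<longleftrightarrow> (\<exists>T. aff_unimod T \<and> marked_normal_form (T ` \<alpha>) ((`) T ` M))"
  proof
    assume "marked_B \<alpha> M"
    then show "\<exists>T. aff_unimod T \<and> marked_normal_form (T ` \<alpha>) ((`) T ` M)"
      by (rule marked_B_imp_normal_form[OF assms(1,2) sides])
  next
    assume "\<exists>T. aff_unimod T \<and> marked_normal_form (T ` \<alpha>) ((`) T ` M)"
    then obtain T where T: "aff_unimod T" "marked_normal_form (T ` \<alpha>) ((`) T ` M)"
      by blast
    moreover have "\<forall>S\<in>(`) T ` M. int_supp_side (T ` \<alpha>) S"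
      using sides int_supp_side_image[OF T(1)] by auto
    ultimately show "marked_B \<alpha> M"
      using marked_normal_form_imp_marked_B marked_B_image_iff by metis
  qed
  then show ?thesis
    unfolding marked_normal_form_def .
qed

end
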